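(* The associated metric $\tilde g$ is Killing (i.e. $\tilde g([x,y],z)=\tilde g(x,[y,z])$ for all $x,y,z\in\mathfrak l$) if and only if $(L,\varphi,\xi,\eta,g)$ belongs to $\mathcal{F}_8\oplus\mathcal{F}_9\oplus\mathcal{F}_{10}$ with $2\lambda=\mu=\nu$, where $\lambda=F_{101}$, $\mu=F_{102}$, $\nu=F_{011}$. Equivalently, $\tilde g$ is Killing iff $C_{12}^0=-C_{01}^1=C_{02}^2$ and all other $C_{ij}^k$ ($i<j$) vanish.
   Context: Let $L$ be a 3-dimensional real connected Lie group with Lie algebra $\mathfrak l$, and let $\{E_0,E_1,E_2\}$ be a basis of left-invariant vector fields, with $[E_i,E_j]=C_{ij}^kE_k$. Define the left-invariant almost contact structure $(\varphi,\xi,\eta)$ by $\varphi E_0=0$, $\varphi E_1=E_2$, $\varphi E_2=-E_1$, $\xi=E_0$, $\eta(E_0)=1$, $\eta(E_1)=\eta(E_2)=0$, and the left-invariant pseudo-Riemannian metric $g$ by $g(E_0,E_0)=g(E_1,E_1)=-g(E_2,E_2)=1$, $g(E_i,E_j)=0$ for $i\neq j$. The associated metric is $\tilde g(x,y)=g(x,\varphi y)+\eta(x)\eta(y)$. Let $\nabla$ be the Levi-Civita connection of $g$, $F(x,y,z)=g((\nabla_x\varphi)y,z)$, and $F_{ijk}=F(E_i,E_j,E_k)$. The manifold belongs to $\mathcal{F}_8\oplus\mathcal{F}_9\oplus\mathcal{F}_{10}$ iff all $F_{ijk}$ vanish except possibly $F_{101}=F_{110}=F_{202}=F_{220}=:\lambda$,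 $F_{102}=F_{120}=-F_{201}=-F_{210}=:\mu$, and $F_{011}=F_{022}=:\nu$ (these are respectively the $\mathcal{F}_8$, $\mathcal{F}_9$, $\mathcal{F}_{10}$ parts). *)

theory Defs
  imports Main "HOL-Analysis.Analysis"
begin

text \<open>A 3-dimensional real Lie algebra with basis E0, E1, E2, given by structure
constants C i j k (so that [E_i,E_j] = sum_k C i j k E_k), indices 0,1,2.
Elements of the Lie algebra are coefficient functions x :: nat => real
(only the values at 0,1,2 matter).\<close>

definition is_structure_constants :: "(nat \<Rightarrow> nat \<Rightarrow> nat \<Rightarrow> real) \<Rightarrow> bool" where
  "is_structure_constants C \<longleftrightarrow>
     (\<forall>i<3. \<forall>j<3. \<forall>k<3. C i j k = - C j i k) \<and>
     (\<forall>i<3. \<forall>j<3. \<forall>k<3. \<forall>m<3.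
        (\<Sum>l<3. C i j l * C l k m + C j k l * C l i m + C k i l * C l j m) = 0)"

definition basis_vec :: "nat \<Rightarrow> nat \<Rightarrow> real" ("E") where
  "E i = (\<lambda>k. if k = i then 1 else 0)"

definition lbr :: "(nat \<Rightarrow> nat \<Rightarrow> nat \<Rightarrow> real) \<Rightarrow> (nat \<Rightarrow> real) \<Rightarrow> (nat \<Rightarrow> real) \<Rightarrow> (nat \<Rightarrow> real)" where
  "lbr C x y = (\<lambda>k. \<Sum>i<3. \<Sum>j<3. x i * y j * C i j k)"

definition sgn3 :: "nat \<Rightarrow> real" where
  "sgn3 i = (if i = 2 then -1 else 1)"

definition gm :: "(nat \<Rightarrow> real) \<Rightarrow> (nat \<Rightarrow> real) \<Rightarrow> real" where
  "gm x y = (\<Sum>i<3. sgn3 i * x i * y i)"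

definition phi :: "(nat \<Rightarrow> real) \<Rightarrow> (nat \<Rightarrow> real)" where
  "phi x = (\<lambda>k. if k = 1 then - x 2 else if k = 2 then x 1 else 0)"

definition eta :: "(nat \<Rightarrow> real) \<Rightarrow> real" where
  "eta x = x 0"

definition xi :: "nat \<Rightarrow> real" where
  "xi = E 0"

definition assoc_metric :: "(nat \<Rightarrow> real) \<Rightarrow> (nat \<Rightarrow> real) \<Rightarrow> real" where
  "assoc_metric x y = gm x (phi y) + eta x * eta y"

text \<open>Levi-Civita connection of the left-invariant metric on left-invariant fields,
via the Koszul formula
  2 g(nabla_x y, z) = g([x,y],z) - g([y,z],x) + g([z,x],y).\<close>
definition lc_nabla :: "(nat \<Rightarrow> nat \<Rightarrow> nat \<Rightarrow> real) \<Rightarrow> (nat \<Rightarrow> real) \<Rightarrow> (nat \<Rightarrow> real) \<Rightarrow> (nat \<Rightarrow> real)" where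
  "lc_nabla C x y = (\<lambda>k. if k < 3 then sgn3 k * ((gm (lbr C x y) (E k) - gm (lbr C y (E k)) x
                        + gm (lbr C (E k) x) y) / 2) else 0)"

text \<open>F(x,y,z) = g((nabla_x phi) y, z), with (nabla_x phi) y = nabla_x (phi y) - phi (nabla_x y)\<close>
definition Ften :: "(nat \<Rightarrow> nat \<Rightarrow> nat \<Rightarrow> real) \<Rightarrow> (nat \<Rightarrow> real) \<Rightarrow> (nat \<Rightarrow> real) \<Rightarrow> (nat \<Rightarrow> real) \<Rightarrow> real" where
  "Ften C x y z = gm (\<lambda>k. lc_nabla C x (phi y) k - phi (lc_nabla C x y) k) z"

definition Fc :: "(nat \<Rightarrow> nat \<Rightarrow> nat \<Rightarrow> real) \<Rightarrow> nat \<Rightarrow> nat \<Rightarrow> nat \<Rightarrow> real" where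
  "Fc C i j k = Ften C (E i) (E j) (E k)"

definition F8910_shape :: "real \<Rightarrow> real \<Rightarrow> real \<Rightarrow> nat \<Rightarrow> nat \<Rightarrow> nat \<Rightarrow> real" where
  "F8910_shape l m n i j k =
     (if (i,j,k) \<in> {(1,0,1),(1,1,0),(2,0,2),(2,2,0)} then l
      else if (i,j,k) \<in> {(1,0,2),(1,2,0)} then m
      else if (i,j,k) \<in> {(2,0,1),(2,1,0)} then - m
      else if (i,j,k) \<in> {(0,1,1),(0,2,2)} then n
      else 0)"

definition in_F8_F9_F10 :: "(nat \<Rightarrow> nat \<Rightarrow> nat \<Rightarrow> real) \<Rightarrow> bool" where
  "in_F8_F9_F10 C \<longleftrightarrow>
     (\<exists>l m n. \<forall>i<3. \<forall>j<3. \<forall>k<3. Fc C i j k = F8910_shape l m n i j k)"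

definition is_Killing :: "(nat \<Rightarrow> nat \<Rightarrow> nat \<Rightarrow> real) \<Rightarrow> ((nat \<Rightarrow> real) \<Rightarrow> (nat \<Rightarrow> real) \<Rightarrow> real) \<Rightarrow> bool" where
  "is_Killing C h \<longleftrightarrow> (\<forall>x y z. h (lbr C x y) z = h x (lbr C y z))"

end

theory Submission imports Defs begin

(* Everything is linear algebra in the basis E0, E1, E2, so both
   conditions of the theorem become explicit linear conditions on the structure
   constants C i j k; only their skew-symmetry is used, never the Jacobi identity.

   (1) The associated metric is g~(x,y) = x0 y0 - x1 y2 - x2 y1.  Testing the
       Killing identity on basis vectors forces the "Killing type" constants
       C_12^0 = -C_01^1 = C_02^2 (all others zero); conversely for such constants
       the bracket is explicit and the identity is checked by ring normalisation.
   (2) Via the Koszul formula every component F_ijk is a linear form in C.  The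
       shape of the class F8+F9+F10 amounts to six linear equations (among them
       C_01^2 = C_02^1), and lambda = (C_02^1 - C_01^2 + C_12^0)/2, mu = -C_01^1,
       nu = C_01^2 + C_02^1 + C_12^0, so the extra condition 2 lambda = mu = nu
       again singles out the Killing type. *)

text \<open>Basis indices are the numerals 0, 1, 2; keep the simplifier from rewriting
  1 to Suc 0, so that rules stated with index 1 keep matching.\<close>
declare One_nat_def [simp del]

lemma less_3_cases: "(i::nat) < 3 \<longleftrightarrow> i = 0 \<or> i = 1 \<or> i = 2"
  by arith

lemma all_less_3: "(\<forall>i<(3::nat). P i) \<longleftrightarrow> P 0 \<and> P 1 \<and> P 2"
  by (auto simp: less_3_cases)

lemma sum_less_3: "(\<Sum>i<(3::nat). f i) = f 0 + f 1 + f 2"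
  by (simp add: eval_nat_numeral One_nat_def)

text \<open>The only property of structure constants the argument needs.\<close>
definition skew_constants :: "(nat \<Rightarrow> nat \<Rightarrow> nat \<Rightarrow> real) \<Rightarrow> bool" where
  "skew_constants C \<longleftrightarrow> (\<forall>i<3. \<forall>j<3. \<forall>k<3. C i j k = - C j i k)"

lemma structure_constants_skew: "is_structure_constants C \<Longrightarrow> skew_constants C"
  unfolding is_structure_constants_def skew_constants_def by blast

lemma skew_constants_swap:
  "skew_constants C \<Longrightarrow> i < 3 \<Longrightarrow> j < 3 \<Longrightarrow> k < 3 \<Longrightarrow> C i j k = - C j i k"
  unfolding skew_constants_def by blast

lemma skew_constants_reduce:
  assumes "skew_constants C" and "k < 3"
  shows "C 0 0 k = 0" "C 1 1 k = 0" "C 2 2 k = 0"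
    and "C 1 0 k = - C 0 1 k" "C 2 0 k = - C 0 2 k" "C 2 1 k = - C 1 2 k"
  using skew_constants_swap[OF assms(1) _ _ assms(2), of 0 0]
    skew_constants_swap[OF assms(1) _ _ assms(2), of 1 1]
    skew_constants_swap[OF assms(1) _ _ assms(2), of 2 2]
    skew_constants_swap[OF assms(1) _ _ assms(2), of 1 0]
    skew_constants_swap[OF assms(1) _ _ assms(2), of 2 0]
    skew_constants_swap[OF assms(1) _ _ assms(2), of 2 1]
  by simp_all

lemma lbr_basis: "i < 3 \<Longrightarrow> j < 3 \<Longrightarrow> lbr C (E i) (E j) = (\<lambda>k. C i j k)"
  unfolding lbr_def by (auto simp: sum_less_3 basis_vec_def less_3_cases)

lemma gm_basis_right: "k < 3 \<Longrightarrow> gm x (E k) = sgn3 k * x k"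
  unfolding gm_def by (auto simp: sum_less_3 basis_vec_def less_3_cases)

lemma gm_basis_left: "k < 3 \<Longrightarrow> gm (E k) x = sgn3 k * x k"
  unfolding gm_def by (auto simp: sum_less_3 basis_vec_def less_3_cases)

lemma assoc_metric_coords: "assoc_metric x y = x 0 * y 0 - x 1 * y 2 - x 2 * y 1"
  unfolding assoc_metric_def gm_def phi_def eta_def sgn3_def by (simp add: sum_less_3)

text \<open>Christoffel symbols: the components of the Levi-Civita connection on basis
  fields, read off from the Koszul formula.\<close>
definition christoffel :: "(nat \<Rightarrow> nat \<Rightarrow> nat \<Rightarrow> real) \<Rightarrow> nat \<Rightarrow> nat \<Rightarrow> nat \<Rightarrow> real" where
  "christoffel C i j k = (if k < 3 then
     sgn3 k * (sgn3 k * C i j k - sgn3 i * C j k i + sgn3 j * C k i j) / 2 else 0)"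

lemma lc_nabla_basis: "i < 3 \<Longrightarrow> j < 3 \<Longrightarrow> lc_nabla C (E i) (E j) = christoffel C i j"
  unfolding lc_nabla_def christoffel_def
  by (auto simp: lbr_basis gm_basis_right gm_basis_left)

lemma lc_nabla_scale: "lc_nabla C x (\<lambda>k. c * y k) = (\<lambda>k. c * lc_nabla C x y k)"
  unfolding lc_nabla_def lbr_def gm_def by (auto simp: sum_less_3 algebra_simps)

definition phi_sign :: "nat \<Rightarrow> real" where
  "phi_sign j = (if j = 1 then 1 else if j = 2 then -1 else 0)"

definition phi_index :: "nat \<Rightarrow> nat" where
  "phi_index j = (if j = 1 then 2 else if j = 2 then 1 else 0)"

lemma phi_basis: "j < 3 \<Longrightarrow> phi (E j) = (\<lambda>k. phi_sign j * E (phi_index j) k)"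
  unfolding phi_def phi_sign_def phi_index_def basis_vec_def by (auto simp: less_3_cases)

lemma Fc_christoffel:
  assumes "i < 3" "j < 3" "k < 3"
  shows "Fc C i j k = sgn3 k * (phi_sign j * christoffel C i (phi_index j) k
           - (if k = 1 then - christoffel C i j 2 else if k = 2 then christoffel C i j 1 else 0))"
proof -
  have "phi_index j < 3" unfolding phi_index_def by auto
  then show ?thesis
    using assms unfolding Fc_def Ften_def phi_basis[OF assms(2)] lc_nabla_scale
      lc_nabla_basis[OF assms(1) \<open>phi_index j < 3\<close>] lc_nabla_basis[OF assms(1,2)]
    by (simp add: gm_basis_right phi_def)
qed

definition killing_type :: "(nat \<Rightarrow> nat \<Rightarrow> nat \<Rightarrow> real) \<Rightarrow> bool" where
  "killing_type C \<longleftrightarrow> C 1 2 0 = - C 0 1 1 \<and> - C 0 1 1 = C 0 2 2 \<and>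
     C 0 1 0 = 0 \<and> C 0 2 0 = 0 \<and> C 0 1 2 = 0 \<and> C 0 2 1 = 0 \<and> C 1 2 1 = 0 \<and> C 1 2 2 = 0"

lemma lbr_killing_type:
  assumes skew: "skew_constants C" and kt: "killing_type C"
  shows "lbr C x y 0 = C 1 2 0 * (x 1 * y 2 - x 2 * y 1)"
    and "lbr C x y 1 = C 1 2 0 * (x 1 * y 0 - x 0 * y 1)"
    and "lbr C x y 2 = C 1 2 0 * (x 0 * y 2 - x 2 * y 0)"
proof -
  have "C 0 1 1 = - C 1 2 0" "C 0 2 2 = C 1 2 0"
    and "C 0 1 0 = 0" "C 0 2 0 = 0" "C 0 1 2 = 0" "C 0 2 1 = 0" "C 1 2 1 = 0" "C 1 2 2 = 0"
    using kt unfolding killing_type_def by auto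
  then show "lbr C x y 0 = C 1 2 0 * (x 1 * y 2 - x 2 * y 1)"
    and "lbr C x y 1 = C 1 2 0 * (x 1 * y 0 - x 0 * y 1)"
    and "lbr C x y 2 = C 1 2 0 * (x 0 * y 2 - x 2 * y 0)"
    by (simp_all add: lbr_def sum_less_3 skew_constants_reduce[OF skew] algebra_simps)
qed

theorem killing_iff_killing_type:
  assumes skew: "skew_constants C"
  shows "is_Killing C assoc_metric \<longleftrightarrow> killing_type C"
proof
  assume "is_Killing C assoc_metric"
  then have basis: "assoc_metric (lbr C (E i) (E j)) (E k) = assoc_metric (E i) (lbr C (E j) (E k))"
    for i j k unfolding is_Killing_def by blast
  have coords: "assoc_metric (\<lambda>l. C i j l) (E k) = assoc_metric (E i) (\<lambda>l. C j k l)"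
    if "i < 3" "j < 3" "k < 3" for i j k using basis[of i j k] that by (simp add: lbr_basis)
  show "killing_type C"
    using coords[of 0 0 1] coords[of 0 0 2] coords[of 0 1 1] coords[of 0 2 2]
      coords[of 1 1 2] coords[of 1 2 2] coords[of 0 1 2] coords[of 0 2 1]
    by (simp add: assoc_metric_coords basis_vec_def skew_constants_reduce[OF skew]
        killing_type_def)
next
  assume "killing_type C"
  then show "is_Killing C assoc_metric"
    unfolding is_Killing_def
    by (simp add: assoc_metric_coords lbr_killing_type[OF skew] algebra_simps)
qed

lemma F8910_parameters:
  assumes skew: "skew_constants C"
  shows "Fc C 1 0 1 = (C 0 2 1 - C 0 1 2 + C 1 2 0) / 2"
    and "Fc C 1 0 2 = - C 0 1 1"
    and "Fc C 0 1 1 = C 0 1 2 + C 0 2 1 + C 1 2 0"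
  by (simp_all add: Fc_christoffel christoffel_def phi_sign_def phi_index_def sgn3_def
      skew_constants_reduce[OF skew] field_simps)

theorem in_F8_F9_F10_iff:
  assumes skew: "skew_constants C"
  shows "in_F8_F9_F10 C \<longleftrightarrow> C 0 1 0 = 0 \<and> C 0 2 0 = 0 \<and> C 1 2 1 = 0 \<and> C 1 2 2 = 0 \<and>
           C 0 2 2 = - C 0 1 1 \<and> C 0 1 2 = C 0 2 1"
  unfolding in_F8_F9_F10_def all_less_3
  by (simp add: Fc_christoffel christoffel_def phi_sign_def phi_index_def sgn3_def
      F8910_shape_def skew_constants_reduce[OF skew]) argo

lemma F8910_balanced_iff_killing_type:
  assumes skew: "skew_constants C"
  shows "in_F8_F9_F10 C \<and> 2 * Fc C 1 0 1 = Fc C 1 0 2 \<and> Fc C 1 0 2 = Fc C 0 1 1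
         \<longleftrightarrow> killing_type C"
  unfolding in_F8_F9_F10_iff[OF skew] F8910_parameters[OF skew] killing_type_def
  by argo

lemma other_constants_vanish_iff:
  "(\<forall>i j k. i < j \<and> j < 3 \<and> k < 3 \<and> (i,j,k) \<notin> {(1,2,0),(0,1,1),(0,2,2)}
      \<longrightarrow> (C::nat \<Rightarrow> nat \<Rightarrow> nat \<Rightarrow> real) i j k = 0)
   \<longleftrightarrow> C 0 1 0 = 0 \<and> C 0 2 0 = 0 \<and> C 0 1 2 = 0 \<and> C 0 2 1 = 0 \<and> C 1 2 1 = 0 \<and> C 1 2 2 = 0"
  (is "?all \<longleftrightarrow> ?six")
proof
  assume all: ?all
  show ?six
    using all[rule_format, of 0 1 0] all[rule_format, of 0 2 0] all[rule_format, of 0 1 2]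
      all[rule_format, of 0 2 1] all[rule_format, of 1 2 1] all[rule_format, of 1 2 2]
    by simp
next
  assume ?six
  show ?all
  proof (intro allI impI)
    fix i j k :: nat
    assume idx: "i < j \<and> j < 3 \<and> k < 3 \<and> (i,j,k) \<notin> {(1,2,0),(0,1,1),(0,2,2)}"
    then have "(i = 0 \<and> j = 1 \<or> i = 0 \<and> j = 2 \<or> i = 1 \<and> j = 2) \<and> (k = 0 \<or> k = 1 \<or> k = 2)"
      by arith
    then show "C i j k = 0" using idx \<open>?six\<close> by auto
  qed
qed

theorem theorem2p3:
  fixes C :: "nat \<Rightarrow> nat \<Rightarrow> nat \<Rightarrow> real"
  assumes "is_structure_constants C"
  shows "(is_Killing C assoc_metric \<longleftrightarrow>
            (in_F8_F9_F10 C \<and> 2 * Fc C 1 0 1 = Fc C 1 0 2 \<and> Fc C 1 0 2 = Fc C 0 1 1))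
       \<and> (is_Killing C assoc_metric \<longleftrightarrow>
            (C 1 2 0 = - C 0 1 1 \<and> - C 0 1 1 = C 0 2 2 \<and>
             (\<forall>i j k. i < j \<and> j < 3 \<and> k < 3 \<and>
                (i,j,k) \<notin> {(1,2,0),(0,1,1),(0,2,2)} \<longrightarrow> C i j k = 0)))"
proof -
  have skew: "skew_constants C" using assms by (rule structure_constants_skew)
  show ?thesis
    unfolding killing_iff_killing_type[OF skew] F8910_balanced_iff_killing_type[OF skew]
      other_constants_vanish_iff killing_type_def
    by simp
qed

end
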